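(* Consider the polynomial vector field on $\mathbb{R}^2$ given by $\dot{x} = f_1(x,y)$, $\dot{y} = f_2(x,y)$, where $$f(x,y) = \begin{pmatrix} -2y(-x^4+2x^2y^2+y^4) \\ 2x(x^4+2x^2y^2-y^4)\end{pmatrix} - (x^2+y^2)\begin{pmatrix} 2x(x^4+2x^2y^2-y^4) \\ 2y(-x^4+2x^2y^2+y^4)\end{pmatrix}.$$ Then the origin is a globally asymptotically stable equilibrium of this system, but the system does not admit an analytic Lyapunov function even locally; i.e., there is no real-analytic function $p$ defined on a neighborhood $S$ of the origin with $p(0,0)=0$, $p(x,y)>0$ and $\langle \nabla p(x,y), f(x,y)\rangle < 0$ for all $(x,y)\in S\setminus\{(0,0)\}$.
   Context: For a system $\dot{\vec x}=f(\vec x)$ with $f(0)=0$, the origin is globally asymptotically stable if it is stable in the sense of Lyapunov (for every $\epsilon>0$ there is $\delta>0$ such that $\|\vec x(0)\|<\delta$ implies $\|\vec x(t)\|<\epsilon$ for all $t\ge 0$) and $\lim_{t\to\infty}\vec x(t)=0$ for every initial condition $\vec x(0)\in\mathbb{R}^2$. A local Lyapunov function is a continuously differentiable function $V$ vanishing at the origin with $V(\vec x)>0$ and $-\langle\nabla V(\vec x), f(\vec x)\rangle>0$ for all $\vec x\in S\setminus\{0\}$, where $S$ is some neighborhood of the origin. *)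

theory Defs
  imports "HOL-Analysis.Analysis"
begin

definition vf :: "real \<times> real \<Rightarrow> real \<times> real" where
  "vf z = (let x = fst z; y = snd z in
     ( -2*y*(- (x^4) + 2*x^2*y^2 + y^4) - (x^2+y^2)*(2*x*(x^4 + 2*x^2*y^2 - y^4)),
        2*x*(x^4 + 2*x^2*y^2 - y^4) - (x^2+y^2)*(2*y*(- (x^4) + 2*x^2*y^2 + y^4))))"

definition is_solution :: "(real \<Rightarrow> real \<times> real) \<Rightarrow> bool" where
  "is_solution \<phi> \<longleftrightarrow> (\<forall>t\<ge>0. (\<phi> has_vector_derivative vf (\<phi> t)) (at t within {0..}))"

definition globally_asymptotically_stable :: bool where
  "globally_asymptotically_stable \<longleftrightarrow>
     (\<forall>z0. \<exists>\<phi>. is_solution \<phi> \<and> \<phi> 0 = z0) \<and>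
     (\<forall>\<epsilon>>0. \<exists>\<delta>>0. \<forall>\<phi>. is_solution \<phi> \<and> norm (\<phi> 0) < \<delta> \<longrightarrow> (\<forall>t\<ge>0. norm (\<phi> t) < \<epsilon>)) \<and>
     (\<forall>\<phi>. is_solution \<phi> \<longrightarrow> (\<phi> \<longlongrightarrow> 0) at_top)"

text \<open>Real analyticity on a set in \<open>\<real>\<^sup>2\<close>: locally around every point the function is the
  sum of an (absolutely / unconditionally) convergent double power series.\<close>
definition real_analytic_on :: "(real \<times> real \<Rightarrow> real) \<Rightarrow> (real \<times> real) set \<Rightarrow> bool" where
  "real_analytic_on p S \<longleftrightarrow>
     (\<forall>a\<in>S. \<exists>r>0. \<exists>c :: nat \<Rightarrow> nat \<Rightarrow> real. \<forall>z\<in>ball a r.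
        ((\<lambda>(i,j). c i j * (fst z - fst a)^i * (snd z - snd a)^j) has_sum p z) UNIV)"

end

theory Submission
  imports Defs "HOL-Computational_Algebra.Polynomial"
begin

text \<open>
  Stability: \<open>W = 2 (x\<^sup>4 + y\<^sup>4) / (x\<^sup>2 + y\<^sup>2)\<close> satisfies \<open>|z|\<^sup>2 \<le> W \<le> 2 |z|\<^sup>2\<close> and decreases along
  the field at least at the rate \<open>2 |z|\<^sup>8\<close>, which gives Lyapunov stability and convergence to the
  origin. Solutions exist for all positive times: Picard's theorem applies to the field truncated
  outside a large ball, and since \<open>W\<close> cannot increase, its solutions never reach the truncated region.

  No analytic Lyapunov function: if \<open>p\<close> were one, let \<open>p\<^sub>d\<close> be the lowest nonzero homogeneous
  part of its expansion at the origin (\<open>d \<ge> 1\<close> as \<open>p(0) = 0\<close>). The lowest part of the field is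
  \<open>f\<^sub>5 = a z + b J z\<close> with \<open>J\<close> the rotation by \<open>\<pi>/2\<close> and \<open>b = 2 (x\<^sup>4 + y\<^sup>4) > 0\<close>, and comparing
  lowest order terms of \<open>\<langle>\<nabla>p, f\<rangle>\<close> along rays gives \<open>\<langle>\<nabla>p\<^sub>d, f\<^sub>5\<rangle> \<le> 0\<close>. On the unit circle this
  says that \<open>p\<^sub>d b\<^bsup>-d/2\<^esup>\<close> is nonincreasing in the angle, hence constant, so
  \<open>p\<^sub>d = K (2 (x\<^sup>4 + y\<^sup>4))\<^bsup>d/2\<^esup>\<close> there. For odd \<open>d\<close> the symmetry \<open>p\<^sub>d(-z) = -p\<^sub>d(z)\<close> forces
  \<open>K = 0\<close>; for \<open>d = 2m\<close>, dehomogenizing gives \<open>p\<^sub>d(x, 1) (x\<^sup>2 + 1)\<^sup>m = K 2\<^sup>m (x\<^sup>4 + 1)\<^sup>m\<close>, which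
  forces \<open>K = 0\<close> because \<open>x\<^sup>4 + 1 \<equiv> 2\<close> modulo \<open>x\<^sup>2 + 1\<close>. Thus \<open>p\<^sub>d = 0\<close>, a contradiction.
\<close>

section \<open>Homogeneous parts of a double power series\<close>

definition hom_part :: "(nat \<Rightarrow> nat \<Rightarrow> real) \<Rightarrow> nat \<Rightarrow> real \<times> real \<Rightarrow> real" where
  "hom_part c n z = (\<Sum>i\<le>n. c i (n - i) * fst z ^ i * snd z ^ (n - i))"

text \<open>The truncated subtractions \<open>i - 1\<close> and \<open>n - i - 1\<close> are harmless: the affected terms
  carry the factor \<open>real i = 0\<close> resp. \<open>real (n - i) = 0\<close>.\<close>
definition hom_part_deriv :: "(nat \<Rightarrow> nat \<Rightarrow> real) \<Rightarrow> nat \<Rightarrow> real \<times> real \<Rightarrow> real \<times> real \<Rightarrow> real" where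
  "hom_part_deriv c n z h = (\<Sum>i\<le>n. c i (n - i) *
     (real i * fst z ^ (i - 1) * snd z ^ (n - i) * fst h
      + real (n - i) * fst z ^ i * snd z ^ (n - i - 1) * snd h))"

definition hom_coeff_norm :: "(nat \<Rightarrow> nat \<Rightarrow> real) \<Rightarrow> nat \<Rightarrow> real" where
  "hom_coeff_norm c n = (\<Sum>i\<le>n. \<bar>c i (n - i)\<bar>)"

lemma abs_fst_le_norm: "\<bar>fst z\<bar> \<le> norm (z :: real \<times> real)"
  using norm_fst_le[of "fst z" "snd z"] by simp

lemma abs_snd_le_norm: "\<bar>snd z\<bar> \<le> norm (z :: real \<times> real)"
  using norm_snd_le[of "snd z" "fst z"] by simp

lemma hom_coeff_norm_nonneg: "hom_coeff_norm c n \<ge> 0"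
  unfolding hom_coeff_norm_def by (intro sum_nonneg) auto

lemma hom_part_has_derivative: "(hom_part c n has_derivative hom_part_deriv c n z) (at z within S)"
  unfolding hom_part_def hom_part_deriv_def[abs_def]
  by (rule has_derivative_sum) (auto intro!: derivative_eq_intros simp: algebra_simps)

lemma bounded_linear_hom_part_deriv: "bounded_linear (hom_part_deriv c n z)"
  using hom_part_has_derivative[of c n z UNIV] has_derivative_bounded_linear by blast

lemma abs_monomial_le_norm_pow:
  assumes "i + j = n"
  shows "\<bar>fst z ^ i * snd z ^ j\<bar> \<le> norm (z :: real \<times> real) ^ n"
proof -
  have "\<bar>fst z ^ i * snd z ^ j\<bar> \<le> norm z ^ i * norm z ^ j"
    unfolding abs_mult power_abs
    by (intro mult_mono power_mono abs_fst_le_norm abs_snd_le_norm) auto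
  then show ?thesis
    using assms by (simp flip: power_add)
qed

lemma abs_hom_part_deriv_le:
  "\<bar>hom_part_deriv c n z h\<bar> \<le> real n * hom_coeff_norm c n * norm z ^ (n - 1) * norm h"
proof -
  let ?N = "norm z ^ (n - 1) * norm h"
  have term_le: "\<bar>real i * fst z ^ (i - 1) * snd z ^ (n - i) * fst h
      + real (n - i) * fst z ^ i * snd z ^ (n - i - 1) * snd h\<bar> \<le> real n * ?N"
    if i: "i \<le> n" for i
  proof -
    have "\<bar>real i * fst z ^ (i - 1) * snd z ^ (n - i) * fst h\<bar> \<le> real i * ?N"
    proof (cases "i = 0")
      case False
      have "\<bar>fst z ^ (i - 1) * snd z ^ (n - i)\<bar> * \<bar>fst h\<bar> \<le> norm z ^ (n - 1) * norm h"
        using False i by (intro mult_mono abs_monomial_le_norm_pow abs_fst_le_norm) auto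
      then show ?thesis
        by (simp add: abs_mult mult.assoc mult_left_mono)
    qed simp
    moreover have "\<bar>real (n - i) * fst z ^ i * snd z ^ (n - i - 1) * snd h\<bar> \<le> real (n - i) * ?N"
    proof (cases "i = n")
      case False
      have "\<bar>fst z ^ i * snd z ^ (n - i - 1)\<bar> * \<bar>snd h\<bar> \<le> norm z ^ (n - 1) * norm h"
        using False i by (intro mult_mono abs_monomial_le_norm_pow abs_snd_le_norm) auto
      then show ?thesis
        by (simp add: abs_mult mult.assoc mult_left_mono)
    qed simp
    moreover have "real i * ?N + real (n - i) * ?N = real n * ?N"
      using i by (simp flip: distrib_right)
    ultimately show ?thesis
      by (smt (verit, best) abs_triangle_ineq)
  qed
  have "\<bar>hom_part_deriv c n z h\<bar> \<le> (\<Sum>i\<le>n. \<bar>c i (n - i)\<bar> * (real n * ?N))"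
    unfolding hom_part_deriv_def
    by (rule order_trans[OF sum_abs], intro sum_mono)
       (simp only: abs_mult atMost_iff, intro mult_left_mono term_le, auto)
  also have "\<dots> = hom_coeff_norm c n * (real n * ?N)"
    unfolding hom_coeff_norm_def by (rule sum_distrib_right[symmetric])
  finally show ?thesis
    by (simp add: mult_ac)
qed

lemma hom_part_scaleR: "hom_part c n (t *\<^sub>R z) = t ^ n * hom_part c n z"
  unfolding hom_part_def sum_distrib_left
proof (intro sum.cong refl)
  fix i assume "i \<in> {..n}"
  then have "t ^ n = t ^ i * t ^ (n - i)"
    by (simp flip: power_add)
  then show "c i (n - i) * fst (t *\<^sub>R z) ^ i * snd (t *\<^sub>R z) ^ (n - i)
      = t ^ n * (c i (n - i) * fst z ^ i * snd z ^ (n - i))"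
    by (simp add: power_mult_distrib)
qed

lemma hom_part_deriv_scaleR: "hom_part_deriv c n (t *\<^sub>R z) h = t ^ (n - 1) * hom_part_deriv c n z h"
  unfolding hom_part_deriv_def sum_distrib_left
proof (intro sum.cong refl)
  fix i assume i: "i \<in> {..n}"
  have radial: "real i * (t * fst z) ^ (i - 1) * (t * snd z) ^ (n - i) * fst h
      = t ^ (n - 1) * (real i * fst z ^ (i - 1) * snd z ^ (n - i) * fst h)"
  proof (cases "i = 0")
    case False
    then have "t ^ (n - 1) = t ^ (i - 1) * t ^ (n - i)"
      using i by (simp flip: power_add)
    then show ?thesis
      by (simp add: power_mult_distrib)
  qed simp
  have angular: "real (n - i) * (t * fst z) ^ i * (t * snd z) ^ (n - i - 1) * snd h
      = t ^ (n - 1) * (real (n - i) * fst z ^ i * snd z ^ (n - i - 1) * snd h)"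
  proof (cases "i = n")
    case False
    then have "t ^ (n - 1) = t ^ i * t ^ (n - i - 1)"
      using i by (simp flip: power_add)
    then show ?thesis
      by (simp add: power_mult_distrib)
  qed simp
  show "c i (n - i) * (real i * fst (t *\<^sub>R z) ^ (i - 1) * snd (t *\<^sub>R z) ^ (n - i) * fst h
        + real (n - i) * fst (t *\<^sub>R z) ^ i * snd (t *\<^sub>R z) ^ (n - i - 1) * snd h)
      = t ^ (n - 1) * (c i (n - i) * (real i * fst z ^ (i - 1) * snd z ^ (n - i) * fst h
        + real (n - i) * fst z ^ i * snd z ^ (n - i - 1) * snd h))"
    unfolding fst_scaleR snd_scaleR real_scaleR_def radial angular by (simp add: algebra_simps)
qed

text \<open>Euler's identity for homogeneous polynomials.\<close>
lemma hom_part_deriv_radial_angular: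
  "hom_part_deriv c n z (a *\<^sub>R z + b *\<^sub>R (- snd z, fst z))
     = a * real n * hom_part c n z + b * hom_part_deriv c n z (- snd z, fst z)"
  unfolding hom_part_deriv_def hom_part_def sum_distrib_left sum.distrib[symmetric]
proof (intro sum.cong refl)
  fix i assume i: "i \<in> {..n}"
  define x y where "x = fst z" and "y = snd z"
  define X P where "X = x ^ i" and "P = real i * x ^ (i - 1)"
  define Y Q where "Y = y ^ (n - i)" and "Q = real (n - i) * y ^ (n - i - 1)"
  have euler: "P * x * Y + X * (Q * y) = real n * (X * Y)"
  proof -
    have "P * x = real i * X" "Q * y = real (n - i) * Y"
      unfolding P_def X_def Q_def Y_def by (cases i; cases "n - i"; simp)+
    then have "P * x * Y + X * (Q * y) = (real i + real (n - i)) * (X * Y)"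
      by (simp add: algebra_simps)
    also have "real i + real (n - i) = real n"
      using i by simp
    finally show ?thesis .
  qed
  have "c i (n - i) * (P * Y * (a * x - b * y) + X * Q * (a * y + b * x))
      = a * c i (n - i) * (P * x * Y + X * (Q * y)) + b * (c i (n - i) * (P * Y * (- y) + X * Q * x))"
    by (simp add: algebra_simps)
  also have "\<dots> = a * real n * (c i (n - i) * X * Y) + b * (c i (n - i) * (P * Y * (- y) + X * Q * x))"
    unfolding euler by simp
  finally show "c i (n - i) * (real i * fst z ^ (i - 1) * snd z ^ (n - i) * fst (a *\<^sub>R z + b *\<^sub>R (- snd z, fst z))
        + real (n - i) * fst z ^ i * snd z ^ (n - i - 1) * snd (a *\<^sub>R z + b *\<^sub>R (- snd z, fst z)))
      = a * real n * (c i (n - i) * fst z ^ i * snd z ^ (n - i))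
        + b * (c i (n - i) * (real i * fst z ^ (i - 1) * snd z ^ (n - i) * fst (- snd z, fst z)
        + real (n - i) * fst z ^ i * snd z ^ (n - i - 1) * snd (- snd z, fst z)))"
    by (simp add: x_def y_def X_def P_def Y_def Q_def mult_ac)
qed

lemma hom_part_at_0: "hom_part c n 0 = (if n = 0 then c 0 0 else 0)"
  using hom_part_scaleR[of c n 0 "(1, 1)"] by (simp add: hom_part_def)

lemma hom_part_sums_at_0: "(\<lambda>n. hom_part c n 0) sums s \<Longrightarrow> s = c 0 0"
  using sums_single[of 0 "\<lambda>_. c 0 0"] sums_unique2 by (simp add: hom_part_at_0)

lemma hom_part_coeff_nonzero_if_sums_nonzero:
  assumes "(\<lambda>n. hom_part c n z) sums s" and "s \<noteq> 0"
  shows "\<exists>n. \<exists>i\<le>n. c i (n - i) \<noteq> 0"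
proof (rule ccontr)
  assume "\<not> ?thesis"
  then have "(\<lambda>n. hom_part c n z) sums 0"
    by (simp add: hom_part_def)
  then show False
    using assms sums_unique2 by blast
qed

lemma has_sum_diagonal_sums:
  fixes f :: "nat \<times> nat \<Rightarrow> 'a::{topological_comm_monoid_add, t3_space}"
  assumes "(f has_sum s) UNIV"
  shows "(\<lambda>n. \<Sum>i\<le>n. f (i, n - i)) sums s"
proof -
  define g where "g q = (snd q, fst q - snd q)" for q :: "nat \<times> nat"
  have "bij_betw g (SIGMA n:UNIV. {..n}) UNIV"
    unfolding g_def by (rule bij_betw_byWitness[where f' = "\<lambda>q. (fst q + snd q, fst q)"]) force+
  then have "((\<lambda>q. f (g q)) has_sum s) (SIGMA n:UNIV. {..n})"
    using assms by (simp only: has_sum_reindex_bij_betw)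
  moreover have "((\<lambda>i. f (g (n, i))) has_sum (\<Sum>i\<le>n. f (i, n - i))) {..n}" for n
    using has_sum_finite[of "{..n}" "\<lambda>i. f (i, n - i)"] by (simp add: g_def)
  ultimately have "((\<lambda>n. \<Sum>i\<le>n. f (i, n - i)) has_sum s) UNIV"
    by (rule has_sum_SigmaD)
  then show ?thesis
    by (rule has_sum_imp_sums)
qed

lemma hom_part_sums:
  assumes "((\<lambda>(i, j). c i j * fst z ^ i * snd z ^ j) has_sum s) UNIV"
  shows "(\<lambda>n. hom_part c n z) sums s"
  using has_sum_diagonal_sums[OF assms] by (simp add: hom_part_def)

lemma summable_of_nat_times_smaller_radius:
  fixes b :: "nat \<Rightarrow> real"
  assumes "summable (\<lambda>n. b n * R ^ n)" and "\<And>n. b n \<ge> 0" and "0 \<le> s" "s < R"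
  shows "summable (\<lambda>n. real n * b n * s ^ n)"
proof -
  have "(\<lambda>n. real n * (s / R) ^ n) \<longlonglongrightarrow> 0"
    by (rule powser_times_n_limit_0) (use assms(3,4) in auto)
  from LIMSEQ_D[OF this, of 1] obtain N where N: "\<And>n. n \<ge> N \<Longrightarrow> \<bar>real n * (s / R) ^ n\<bar> < 1"
    by auto
  show ?thesis
  proof (rule summable_comparison_test'[OF assms(1)])
    fix n assume "N \<le> n"
    then have "real n * (s / R) ^ n \<le> 1"
      using N by fastforce
    then have "b n * R ^ n * (real n * (s / R) ^ n) \<le> b n * R ^ n"
      using assms(2)[of n] assms(3,4) by (simp add: mult_left_le)
    then show "norm (real n * b n * s ^ n) \<le> b n * R ^ n"
      using assms(2)[of n] assms(3,4) by (simp add: power_divide abs_mult mult_ac)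
  qed
qed

lemma has_derivative_series_Mtest:
  fixes f :: "nat \<Rightarrow> 'a::real_normed_vector \<Rightarrow> 'b::banach"
  assumes "convex S"
    and deriv: "\<And>n x. x \<in> S \<Longrightarrow> (f n has_derivative f' n x) (at x within S)"
    and bound: "\<And>n x h. x \<in> S \<Longrightarrow> norm (f' n x h) \<le> B n * norm h"
    and "summable B" and "a \<in> S" and "(\<lambda>n. f n a) sums l"
  shows "\<exists>g. \<forall>x\<in>S. (\<lambda>n. f n x) sums g x \<and> (g has_derivative (\<lambda>h. \<Sum>n. f' n x h)) (at x within S)"
proof (rule has_derivative_series[OF \<open>convex S\<close> deriv _ \<open>a \<in> S\<close> \<open>(\<lambda>n. f n a) sums l\<close>])
  fix e :: real assume "e > 0"
  then obtain N where N: "\<And>n. n \<ge> N \<Longrightarrow> norm (\<Sum>i. B (i + n)) < e"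
    using suminf_exist_split[OF _ \<open>summable B\<close>] by blast
  have tail: "norm ((\<Sum>i<n. f' i x h) - (\<Sum>n. f' n x h)) \<le> e * norm h"
    if "N \<le> n" "x \<in> S" for n x h
  proof -
    have sB: "summable (\<lambda>i. B (i + n) * norm h)"
      using summable_mult2[OF \<open>summable B\<close>, of "norm h"] by (subst summable_iff_shift) simp
    have sf: "summable (\<lambda>i. norm (f' (i + n) x h))"
      by (rule summable_comparison_test'[OF sB]) (use bound \<open>x \<in> S\<close> in auto)
    have "summable (\<lambda>i. f' i x h)"
      using sf by (subst summable_iff_shift[symmetric, of _ n]) (rule summable_norm_cancel)
    then have "norm ((\<Sum>i<n. f' i x h) - (\<Sum>n. f' n x h)) = norm (\<Sum>i. f' (i + n) x h)"
      by (subst suminf_split_initial_segment[of _ n]) (simp_all add: norm_minus_commute)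
    also have "\<dots> \<le> (\<Sum>i. norm (f' (i + n) x h))"
      by (rule summable_norm[OF sf])
    also have "\<dots> \<le> (\<Sum>i. B (i + n) * norm h)"
      by (rule suminf_le[OF _ sf sB]) (use bound \<open>x \<in> S\<close> in auto)
    also have "\<dots> = (\<Sum>i. B (i + n)) * norm h"
      by (rule suminf_mult2[symmetric]) (use \<open>summable B\<close> in simp)
    also have "\<dots> \<le> e * norm h"
      using N[OF \<open>N \<le> n\<close>] by (intro mult_right_mono) auto
    finally show ?thesis .
  qed
  then show "\<forall>\<^sub>F n in sequentially. \<forall>x\<in>S. \<forall>h. norm ((\<Sum>i<n. f' i x h) - (\<Sum>n. f' n x h)) \<le> e * norm h"
    unfolding eventually_sequentially by blast
qed

lemma hom_part_series_has_derivative: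
  assumes sm: "summable (\<lambda>n. real n * hom_coeff_norm c n * \<sigma> ^ n)" and "\<sigma> > 0"
    and sums: "\<And>z. z \<in> ball 0 \<sigma> \<Longrightarrow> (\<lambda>n. hom_part c n z) sums p z"
    and z: "z \<in> ball 0 \<sigma>"
  shows "(p has_derivative (\<lambda>h. \<Sum>n. hom_part_deriv c n z h)) (at z)"
proof -
  define B where "B n = real n * hom_coeff_norm c n * \<sigma> ^ (n - 1)" for n
  have "(\<lambda>n. real n * hom_coeff_norm c n * \<sigma> ^ n * (1 / \<sigma>)) = B"
    unfolding B_def using \<open>\<sigma> > 0\<close> by (intro ext, case_tac n) auto
  then have "summable B"
    using summable_mult2[OF sm, of "1 / \<sigma>"] by simp
  have bound: "norm (hom_part_deriv c n x h) \<le> B n * norm h" if "x \<in> ball 0 \<sigma>" for n x h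
  proof -
    have "\<bar>hom_part_deriv c n x h\<bar> \<le> real n * hom_coeff_norm c n * norm x ^ (n - 1) * norm h"
      by (rule abs_hom_part_deriv_le)
    also have "\<dots> \<le> real n * hom_coeff_norm c n * \<sigma> ^ (n - 1) * norm h"
      using that hom_coeff_norm_nonneg[of c n]
      by (intro mult_right_mono mult_left_mono power_mono) auto
    finally show ?thesis
      by (simp add: B_def)
  qed
  have "\<exists>g. \<forall>x\<in>ball 0 \<sigma>. (\<lambda>n. hom_part c n x) sums g x
      \<and> (g has_derivative (\<lambda>h. \<Sum>n. hom_part_deriv c n x h)) (at x within ball 0 \<sigma>)"
    using has_derivative_series_Mtest[where S = "ball 0 \<sigma>" and a = 0 and l = "p 0",
        OF convex_ball hom_part_has_derivative bound \<open>summable B\<close>] sums \<open>\<sigma> > 0\<close>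
    by simp
  then obtain g where g: "\<And>x. x \<in> ball 0 \<sigma> \<Longrightarrow> (\<lambda>n. hom_part c n x) sums g x
      \<and> (g has_derivative (\<lambda>h. \<Sum>n. hom_part_deriv c n x h)) (at x within ball 0 \<sigma>)"
    by blast
  have "(g has_derivative (\<lambda>h. \<Sum>n. hom_part_deriv c n z h)) (at z)"
    using g[OF z] at_within_open[OF z open_ball] by simp
  moreover have "g x = p x" if "x \<in> ball 0 \<sigma>" for x
    using g[OF that] sums[OF that] sums_unique2 by blast
  ultimately show ?thesis
    using has_derivative_transform_within_open[OF _ open_ball z] by blast
qed

lemma real_analytic_on_hom_part_expansion:
  assumes "real_analytic_on p S" and "(0, 0) \<in> S"
  obtains \<sigma> c where "\<sigma> > 0" and "summable (\<lambda>n. real n * hom_coeff_norm c n * \<sigma> ^ n)"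
    and "\<And>z. z \<in> ball 0 \<sigma> \<Longrightarrow> (\<lambda>n. hom_part c n z) sums p z"
proof -
  obtain r c where "r > 0" and has_sum:
    "\<And>z. z \<in> ball 0 r \<Longrightarrow> ((\<lambda>(i, j). c i j * fst z ^ i * snd z ^ j) has_sum p z) UNIV"
    using assms unfolding real_analytic_on_def by (force simp: zero_prod_def)
  define \<rho> where "\<rho> = r / 3"
  have "norm (\<rho>, \<rho>) \<le> norm \<rho> + norm \<rho>"
    by (rule norm_Pair_le)
  then have "(\<rho>, \<rho>) \<in> ball 0 r"
    using \<open>r > 0\<close> by (simp add: \<rho>_def)
  then have "(\<lambda>(i, j). c i j * \<rho> ^ i * \<rho> ^ j) summable_on UNIV"
    using has_sum has_sum_imp_summable by fastforce
  then have "((\<lambda>q. norm ((\<lambda>(i, j). c i j * \<rho> ^ i * \<rho> ^ j) q)) has_sum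
      infsum (\<lambda>q. norm ((\<lambda>(i, j). c i j * \<rho> ^ i * \<rho> ^ j) q)) UNIV) UNIV"
    using summable_on_iff_abs_summable_on_real has_sum_infsum by blast
  then have "summable (\<lambda>n. \<Sum>i\<le>n. norm (c i (n - i) * \<rho> ^ i * \<rho> ^ (n - i)))"
    using has_sum_diagonal_sums sums_summable by fastforce
  moreover have "(\<Sum>i\<le>n. norm (c i (n - i) * \<rho> ^ i * \<rho> ^ (n - i))) = hom_coeff_norm c n * \<rho> ^ n" for n
    unfolding hom_coeff_norm_def sum_distrib_right
    using \<open>r > 0\<close> by (intro sum.cong refl) (simp add: \<rho>_def abs_mult mult.assoc flip: power_add)
  ultimately have "summable (\<lambda>n. hom_coeff_norm c n * \<rho> ^ n)"
    by simp
  then have "summable (\<lambda>n. real n * hom_coeff_norm c n * (\<rho> / 2) ^ n)"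
    by (rule summable_of_nat_times_smaller_radius[OF _ hom_coeff_norm_nonneg])
       (use \<open>r > 0\<close> in \<open>auto simp: \<rho>_def\<close>)
  moreover have "(\<lambda>n. hom_part c n z) sums p z" if "z \<in> ball 0 (\<rho> / 2)" for z
    by (rule hom_part_sums, rule has_sum) (use that \<open>r > 0\<close> in \<open>auto simp: \<rho>_def\<close>)
  ultimately show thesis
    using that[of "\<rho> / 2"] \<open>r > 0\<close> by (simp add: \<rho>_def)
qed

section \<open>The lowest homogeneous part of an analytic Lyapunov function\<close>

lemma not_dvd_x4_plus_one_pow: "\<not> [:1, 0, 1:] dvd ([:1, 0, 0, 0, 1:] :: real poly) ^ m"
proof
  let ?q = "[:1, 0, 1:] :: real poly"
  assume "?q dvd [:1, 0, 0, 0, 1:] ^ m"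
  then have "[:1, 0, 0, 0, 1:] ^ m mod ?q = 0"
    by simp
  moreover have "[:1, 0, 0, 0, 1:] = [:2:] + [:-1, 0, 1:] * ?q"
    by simp
  then have "[:1, 0, 0, 0, 1:] ^ m mod ?q = [:2:] ^ m mod ?q"
    by (metis mod_mult_self1 power_mod)
  also have "\<dots> = [:2 ^ m:]"
    by (simp add: mod_poly_less poly_const_pow)
  finally show False
    by simp
qed

definition vf_quintic :: "real \<times> real \<Rightarrow> real \<times> real" where
  "vf_quintic z = (let x = fst z; y = snd z in
     (-2*y*(- (x^4) + 2*x^2*y^2 + y^4), 2*x*(x^4 + 2*x^2*y^2 - y^4)))"

lemma vf_quintic_radial_angular:
  "vf_quintic z = (4 * fst z * snd z * (fst z ^ 2 - snd z ^ 2)) *\<^sub>R z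
     + (2 * (fst z ^ 4 + snd z ^ 4)) *\<^sub>R (- snd z, fst z)"
  by (simp add: vf_quintic_def Let_def prod_eq_iff algebra_simps power2_eq_square power4_eq_xxxx)

lemma vf_scaleR: "vf (t *\<^sub>R u) = t ^ 5 *\<^sub>R vf_quintic u + t ^ 7 *\<^sub>R (vf u - vf_quintic u)"
  unfolding vf_def vf_quintic_def Let_def by (simp add: prod_eq_iff, intro conjI; algebra)

lemma sum_squared_le_2_sum_squares: "(a + b) ^ 2 \<le> 2 * (a ^ 2 + b ^ 2)" for a b :: real
  using zero_le_power2[of "a - b"] by (simp add: power2_diff power2_sum algebra_simps)

lemma hom_part_on_circle_has_real_derivative:
  "((\<lambda>\<theta>. hom_part c d (cos \<theta>, sin \<theta>)) has_real_derivative
     hom_part_deriv c d (cos \<theta>, sin \<theta>) (- sin \<theta>, cos \<theta>)) (at \<theta>)"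
proof -
  have "((\<lambda>\<theta>. (cos \<theta>, sin \<theta>)) has_derivative (\<lambda>s. s *\<^sub>R (- sin \<theta>, cos \<theta>))) (at \<theta>)"
    by (auto intro!: derivative_eq_intros simp: prod_eq_iff)
  from has_derivative_compose[OF this hom_part_has_derivative]
  have "((\<lambda>\<theta>. hom_part c d (cos \<theta>, sin \<theta>)) has_derivative
      (\<lambda>s. hom_part_deriv c d (cos \<theta>, sin \<theta>) (s *\<^sub>R (- sin \<theta>, cos \<theta>)))) (at \<theta>)"
    by (simp add: o_def)
  moreover have "hom_part_deriv c d (cos \<theta>, sin \<theta>) (s *\<^sub>R (- sin \<theta>, cos \<theta>))
      = hom_part_deriv c d (cos \<theta>, sin \<theta>) (- sin \<theta>, cos \<theta>) * s" for s
    unfolding linear_scale[OF bounded_linear.linear[OF bounded_linear_hom_part_deriv]] by simp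
  ultimately show ?thesis
    by (simp add: has_field_derivative_def)
qed

text \<open>On the unit circle, \<open>\<langle>\<nabla>p\<^sub>d, f\<^sub>5\<rangle> = a d p\<^sub>d + b \<partial>\<^sub>\<theta>p\<^sub>d\<close> with
  \<open>b = 2 (cos\<^sup>4 \<theta> + sin\<^sup>4 \<theta>)\<close> and \<open>b' = -2a\<close>, so its sign is that of the derivative of
  \<open>p\<^sub>d b\<^bsup>-d/2\<^esup>\<close>.\<close>
lemma hom_part_circle_weighted_antimono:
  assumes nonpos: "\<And>u. norm u = 1 \<Longrightarrow> hom_part_deriv c d u (vf_quintic u) \<le> 0"
    and "s \<le> t"
  defines "\<psi> \<equiv> \<lambda>\<theta>::real. hom_part c d (cos \<theta>, sin \<theta>) * (2 * (cos \<theta> ^ 4 + sin \<theta> ^ 4)) powr (- (real d / 2))"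
  shows "\<psi> t \<le> \<psi> s"
proof -
  define \<phi> where "\<phi> \<theta> = hom_part c d (cos \<theta>, sin \<theta>)" for \<theta> :: real
  define \<phi>' where "\<phi>' \<theta> = hom_part_deriv c d (cos \<theta>, sin \<theta>) (- sin \<theta>, cos \<theta>)" for \<theta> :: real
  define a where "a \<theta> = 4 * cos \<theta> * sin \<theta> * (cos \<theta> ^ 2 - sin \<theta> ^ 2)" for \<theta> :: real
  define b where "b \<theta> = 2 * (cos \<theta> ^ 4 + sin \<theta> ^ 4)" for \<theta> :: real
  define e where "e = - (real d / 2)"
  have b_pos: "b \<theta> > 0" for \<theta>
  proof -
    have "1 = (cos \<theta> ^ 2 + sin \<theta> ^ 2) ^ 2"
      by simp
    also have "\<dots> \<le> b \<theta>"
      using sum_squared_le_2_sum_squares[of "cos \<theta> ^ 2" "sin \<theta> ^ 2"]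
      by (simp add: b_def flip: power_mult)
    finally show ?thesis
      by simp
  qed
  have d\<phi>: "(\<phi> has_real_derivative \<phi>' \<theta>) (at \<theta>)" for \<theta>
    unfolding \<phi>_def[abs_def] \<phi>'_def by (rule hom_part_on_circle_has_real_derivative)
  have db: "(b has_real_derivative - 2 * a \<theta>) (at \<theta>)" for \<theta>
    unfolding b_def[abs_def] a_def
    by (auto intro!: derivative_eq_intros simp: algebra_simps power2_eq_square power3_eq_cube)
  have "a \<theta> * real d * \<phi> \<theta> + b \<theta> * \<phi>' \<theta> = hom_part_deriv c d (cos \<theta>, sin \<theta>) (vf_quintic (cos \<theta>, sin \<theta>))"
    for \<theta>
    unfolding vf_quintic_radial_angular hom_part_deriv_radial_angular
    by (simp add: a_def b_def \<phi>_def \<phi>'_def)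
  also have "\<dots> \<theta> \<le> 0" for \<theta>
    by (rule nonpos) (simp add: norm_Pair)
  finally have key: "a \<theta> * real d * \<phi> \<theta> + b \<theta> * \<phi>' \<theta> \<le> 0" for \<theta> .
  have d\<psi>: "(\<psi> has_real_derivative b \<theta> powr (e - 1) * (a \<theta> * real d * \<phi> \<theta> + b \<theta> * \<phi>' \<theta>)) (at \<theta>)"
    for \<theta>
  proof -
    have "(\<psi> has_real_derivative
        \<phi>' \<theta> * b \<theta> powr e + e * b \<theta> powr (e - of_nat 1) * (- 2 * a \<theta>) * \<phi> \<theta>) (at \<theta>)"
      unfolding \<psi>_def e_def[symmetric] b_def[symmetric] \<phi>_def[symmetric]
      by (rule DERIV_mult[OF d\<phi> DERIV_fun_powr[OF db b_pos]])
    moreover have "b \<theta> powr e = b \<theta> powr (e - 1) * b \<theta>"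
      using b_pos[of \<theta>] by (simp add: powr_diff)
    ultimately show ?thesis
      by (simp add: e_def algebra_simps)
  qed
  show ?thesis
  proof (rule DERIV_nonpos_imp_nonincreasing[OF \<open>s \<le> t\<close>])
    fix \<theta>
    show "\<exists>y. (\<psi> has_real_derivative y) (at \<theta>) \<and> y \<le> 0"
      using d\<psi>[of \<theta>] mult_nonneg_nonpos[OF powr_ge_zero key] by blast
  qed
qed

lemma quartic_sum_pos: "z \<noteq> 0 \<Longrightarrow> 0 < fst z ^ 4 + snd z ^ 4" for z :: "real \<times> real"
  using sum_power2_gt_zero_iff[of "fst z ^ 2" "snd z ^ 2"] by (simp add: prod_eq_iff flip: power_mult)

lemma hom_part_on_unit_circle:
  assumes "\<And>u. norm u = 1 \<Longrightarrow> hom_part_deriv c d u (vf_quintic u) \<le> 0"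
  obtains K where "\<And>u. norm u = 1 \<Longrightarrow> hom_part c d u = K * (2 * (fst u ^ 4 + snd u ^ 4)) powr (real d / 2)"
    and "odd d \<Longrightarrow> K = 0"
proof -
  define \<psi> where "\<psi> \<theta> = hom_part c d (cos \<theta>, sin \<theta>) * (2 * (cos \<theta> ^ 4 + sin \<theta> ^ 4)) powr (- (real d / 2))"
    for \<theta> :: real
  have \<psi>_const: "\<psi> \<theta> = \<psi> 0" if "0 \<le> \<theta>" "\<theta> \<le> 2 * pi" for \<theta>
  proof -
    have "\<psi> (2 * pi) \<le> \<psi> \<theta>" "\<psi> \<theta> \<le> \<psi> 0"
      using hom_part_circle_weighted_antimono[OF assms] that unfolding \<psi>_def by blast+
    moreover have "\<psi> (2 * pi) = \<psi> 0"
      by (simp add: \<psi>_def)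
    ultimately show ?thesis
      by linarith
  qed
  show thesis
  proof
    fix u :: "real \<times> real" assume "norm u = 1"
    then have "fst u ^ 2 + snd u ^ 2 = 1"
      by (simp add: norm_prod_def power2_eq_square)
    then obtain \<theta> where \<theta>: "0 \<le> \<theta>" "\<theta> < 2 * pi" "u = (cos \<theta>, sin \<theta>)"
      using sincos_total_2pi by (metis prod.collapse)
    have "u \<noteq> 0"
      using \<open>norm u = 1\<close> by auto
    have "0 < 2 * (fst u ^ 4 + snd u ^ 4)"
      using quartic_sum_pos[OF \<open>u \<noteq> 0\<close>] by (rule mult_pos_pos[OF zero_less_numeral])
    then have "hom_part c d u = \<psi> \<theta> * (2 * (fst u ^ 4 + snd u ^ 4)) powr (real d / 2)"
      by (simp add: \<psi>_def \<theta>(3) mult.assoc flip: powr_add)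
    then show "hom_part c d u = \<psi> 0 * (2 * (fst u ^ 4 + snd u ^ 4)) powr (real d / 2)"
      using \<psi>_const[of \<theta>] \<theta> by simp
  next
    assume "odd d"
    have "hom_part c d (cos pi, sin pi) = - hom_part c d (cos 0, sin 0)"
      using hom_part_scaleR[of c d "-1" "(1, 0)"] \<open>odd d\<close> by simp
    then have "\<psi> pi = - \<psi> 0"
      by (simp add: \<psi>_def)
    then show "\<psi> 0 = 0"
      using \<psi>_const[of pi] by simp
  qed
qed

definition hom_part_poly :: "(nat \<Rightarrow> nat \<Rightarrow> real) \<Rightarrow> nat \<Rightarrow> real poly" where
  "hom_part_poly c d = (\<Sum>i\<le>d. monom (c i (d - i)) i)"

lemma poly_hom_part_poly: "poly (hom_part_poly c d) x = hom_part c d (x, 1)"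
  by (simp add: hom_part_poly_def hom_part_def poly_sum poly_monom mult.commute)

lemma coeff_hom_part_poly: "i \<le> d \<Longrightarrow> coeff (hom_part_poly c d) i = c i (d - i)"
  by (simp add: hom_part_poly_def coeff_sum coeff_monom sum.delta')

lemma hom_part_times_norm_pow_if_quartic_profile:
  assumes profile: "\<And>u. norm u = 1 \<Longrightarrow> hom_part c d u = K * (2 * (fst u ^ 4 + snd u ^ 4)) powr (real d / 2)"
    and "z \<noteq> 0"
  shows "hom_part c d z * norm z ^ d = K * (2 * (fst z ^ 4 + snd z ^ 4)) powr (real d / 2)"
proof -
  define r where "r = norm z"
  define A where "A = 2 * (fst z ^ 4 + snd z ^ 4)"
  have "r > 0" "A \<ge> 0"
    using \<open>z \<noteq> 0\<close> by (simp_all add: r_def A_def)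
  have "norm ((1 / r) *\<^sub>R z) = 1"
    using \<open>r > 0\<close> by (simp add: r_def)
  then have "hom_part c d ((1 / r) *\<^sub>R z)
      = K * (2 * (fst ((1 / r) *\<^sub>R z) ^ 4 + snd ((1 / r) *\<^sub>R z) ^ 4)) powr (real d / 2)"
    by (rule profile)
  also have "2 * (fst ((1 / r) *\<^sub>R z) ^ 4 + snd ((1 / r) *\<^sub>R z) ^ 4) = A / r ^ 4"
    by (simp add: A_def power_divide add_divide_distrib)
  also have "(A / r ^ 4) powr (real d / 2) = A powr (real d / 2) / (r ^ d) ^ 2"
  proof -
    have "(r ^ 4) powr (real d / 2) = (r powr 4) powr (real d / 2)"
      using \<open>r > 0\<close> by (simp add: powr_realpow)
    also have "\<dots> = r powr real (d * 2)"
      by (simp add: powr_powr mult.commute)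
    also have "\<dots> = (r ^ d) ^ 2"
      by (simp only: powr_realpow[OF \<open>r > 0\<close>] power_mult)
    finally show ?thesis
      using \<open>A \<ge> 0\<close> by (simp add: powr_divide)
  qed
  finally have "hom_part c d ((1 / r) *\<^sub>R z) * (r ^ d) ^ 2 = K * A powr (real d / 2)"
    using \<open>r > 0\<close> by simp
  moreover have "hom_part c d z = r ^ d * hom_part c d ((1 / r) *\<^sub>R z)"
    using hom_part_scaleR[of c d r "(1 / r) *\<^sub>R z"] \<open>r > 0\<close> by simp
  ultimately show ?thesis
    by (simp add: r_def A_def power2_eq_square mult_ac)
qed

lemma quartic_profile_const_eq_0_if_even:
  assumes "d = 2 * m" and "m \<ge> 1"
    and profile: "\<And>u. norm u = 1 \<Longrightarrow> hom_part c d u = K * (2 * (fst u ^ 4 + snd u ^ 4)) powr (real d / 2)"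
  shows "K = 0"
proof -
  define q w :: "real poly" where "q = [:1, 0, 1:]" and "w = [:1, 0, 0, 0, 1:]"
  have "poly (hom_part_poly c d * q ^ m) x = poly (smult (K * 2 ^ m) (w ^ m)) x" for x
  proof -
    have "0 < x ^ 4 + 1"
      using quartic_sum_pos[of "(x, 1)"] by (simp add: zero_prod_def)
    then have "(2 * (x ^ 4 + 1)) powr (real d / 2) = (2 * (x ^ 4 + 1)) ^ m"
      using powr_realpow by (simp add: \<open>d = 2 * m\<close>)
    moreover have "norm (x, 1 :: real) ^ d = (x ^ 2 + 1) ^ m"
      by (simp add: \<open>d = 2 * m\<close> norm_Pair power_mult)
    moreover have "(x, 1) \<noteq> (0 :: real \<times> real)"
      by (simp add: zero_prod_def)
    ultimately have eq: "hom_part c d (x, 1) * (x ^ 2 + 1) ^ m = K * (2 * (x ^ 4 + 1)) ^ m"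
      using hom_part_times_norm_pow_if_quartic_profile[OF profile, of "(x, 1)"] by simp
    have "poly q x = x ^ 2 + 1" "poly w x = x ^ 4 + 1"
      by (simp_all add: q_def w_def algebra_simps power2_eq_square power4_eq_xxxx)
    then have "poly (hom_part_poly c d * q ^ m) x = hom_part c d (x, 1) * (x ^ 2 + 1) ^ m"
      by (simp add: poly_hom_part_poly)
    also have "\<dots> = K * (2 * (x ^ 4 + 1)) ^ m"
      by (rule eq)
    also have "\<dots> = poly (smult (K * 2 ^ m) (w ^ m)) x"
      using \<open>poly w x = x ^ 4 + 1\<close> by (simp only: poly_smult poly_power power_mult_distrib mult.assoc)
    finally show ?thesis .
  qed
  then have "poly (hom_part_poly c d * q ^ m) = poly (smult (K * 2 ^ m) (w ^ m))"
    by (rule ext)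
  then have "hom_part_poly c d * q ^ m = smult (K * 2 ^ m) (w ^ m)"
    by (simp only: poly_eq_poly_eq_iff)
  moreover have "q dvd hom_part_poly c d * q ^ m"
    using \<open>m \<ge> 1\<close> by (simp add: dvd_power)
  ultimately have "K \<noteq> 0 \<Longrightarrow> q dvd w ^ m"
    by (metis dvd_smult_cancel mult_eq_0_iff power_not_zero zero_neq_numeral)
  then show ?thesis
    using not_dvd_x4_plus_one_pow q_def w_def by blast
qed

lemma hom_part_coeffs_eq_zero_if_quartic_profile:
  assumes "d \<ge> 1"
    and profile: "\<And>u. norm u = 1 \<Longrightarrow> hom_part c d u = K * (2 * (fst u ^ 4 + snd u ^ 4)) powr (real d / 2)"
    and "odd d \<Longrightarrow> K = 0"
    and "i \<le> d"
  shows "c i (d - i) = 0"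
proof -
  have "K = 0"
  proof (cases "odd d")
    case False
    then obtain m where "d = 2 * m"
      by blast
    then show ?thesis
      using quartic_profile_const_eq_0_if_even[OF _ _ profile] \<open>d \<ge> 1\<close> by simp
  qed (use \<open>odd d \<Longrightarrow> K = 0\<close> in blast)
  then have "hom_part c d z = 0" for z
    using hom_part_times_norm_pow_if_quartic_profile[OF profile, of z] hom_part_at_0[of c d] \<open>d \<ge> 1\<close>
    by (cases "z = 0") auto
  then have "hom_part_poly c d = 0"
    using poly_eq_poly_eq_iff[of "hom_part_poly c d" 0] poly_hom_part_poly by auto
  then show ?thesis
    using coeff_hom_part_poly[OF \<open>i \<le> d\<close>, of c] by simp
qed

lemma summable_hom_part_deriv_tail:
  assumes sm: "summable (\<lambda>n. real n * hom_coeff_norm c n * \<sigma> ^ n)" and "\<sigma> > 0"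
    and "norm u = 1" and "0 \<le> t" "t \<le> \<sigma>"
  shows "summable (\<lambda>k. hom_part_deriv c (k + d) u v * t ^ k)"
proof (rule summable_comparison_test')
  show "summable (\<lambda>k. norm v / \<sigma> ^ d * (real (k + d) * hom_coeff_norm c (k + d) * \<sigma> ^ (k + d)))"
    by (rule summable_mult, rule summable_ignore_initial_segment[OF sm])
  fix k
  have "\<bar>hom_part_deriv c (k + d) u v\<bar> \<le> real (k + d) * hom_coeff_norm c (k + d) * norm v"
    using abs_hom_part_deriv_le[of c "k + d" u v] \<open>norm u = 1\<close> by simp
  then have "norm (hom_part_deriv c (k + d) u v * t ^ k)
      \<le> real (k + d) * hom_coeff_norm c (k + d) * norm v * \<sigma> ^ k"
    using assms(4,5) by (simp add: abs_mult) (intro mult_mono power_mono, auto)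
  also have "\<dots> = norm v / \<sigma> ^ d * (real (k + d) * hom_coeff_norm c (k + d) * \<sigma> ^ (k + d))"
    using \<open>\<sigma> > 0\<close> by (simp add: power_add field_simps)
  finally show "norm (hom_part_deriv c (k + d) u v * t ^ k)
      \<le> norm v / \<sigma> ^ d * (real (k + d) * hom_coeff_norm c (k + d) * \<sigma> ^ (k + d))" .
qed

lemma hom_part_deriv_vf_series_along_ray:
  assumes sm: "summable (\<lambda>n. real n * hom_coeff_norm c n * \<sigma> ^ n)" and "\<sigma> > 0"
    and "norm u = 1" and "0 \<le> t" "t \<le> \<sigma>"
    and below: "\<And>n i. n < d \<Longrightarrow> i \<le> n \<Longrightarrow> c i (n - i) = 0" and "d \<ge> 1"
  shows "(\<lambda>n. hom_part_deriv c n (t *\<^sub>R u) (vf (t *\<^sub>R u))) sums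
    (t ^ (d + 4) * ((\<Sum>k. hom_part_deriv c (k + d) u (vf_quintic u) * t ^ k)
      + t ^ 2 * (\<Sum>k. hom_part_deriv c (k + d) u (vf u - vf_quintic u) * t ^ k)))"
proof -
  define A where "A n = hom_part_deriv c n u (vf_quintic u)" for n
  define B where "B n = hom_part_deriv c n u (vf u - vf_quintic u)" for n
  define T where "T n = hom_part_deriv c n (t *\<^sub>R u) (vf (t *\<^sub>R u))" for n
  have T_eq: "T n = t ^ (n - 1) * (t ^ 5 * A n + t ^ 7 * B n)" for n
    using bounded_linear.linear[OF bounded_linear_hom_part_deriv]
    by (simp add: T_def A_def B_def hom_part_deriv_scaleR vf_scaleR linear_add linear_scale)
  have "T n = 0" if "n < d" for n
    using below[OF that] by (simp add: T_def hom_part_deriv_def)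
  moreover have "T (k + d) = t ^ (d + 4) * (A (k + d) * t ^ k + t ^ 2 * (B (k + d) * t ^ k))" for k
  proof -
    have "t ^ (k + d - 1) * t ^ 5 = t ^ (d + 4) * t ^ k"
         "t ^ (k + d - 1) * t ^ 7 = t ^ (d + 4) * t ^ 2 * t ^ k"
      using \<open>d \<ge> 1\<close> by (simp_all add: add_ac flip: power_add)
    then show ?thesis
      unfolding T_eq by (simp add: algebra_simps)
  qed
  moreover have "(\<lambda>k. A (k + d) * t ^ k + t ^ 2 * (B (k + d) * t ^ k)) sums
      ((\<Sum>k. A (k + d) * t ^ k) + t ^ 2 * (\<Sum>k. B (k + d) * t ^ k))"
    unfolding A_def B_def
    by (intro sums_add sums_mult summable_sums summable_hom_part_deriv_tail[OF sm]) (use assms in auto)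
  ultimately have "(\<lambda>k. T (k + d)) sums
      (t ^ (d + 4) * ((\<Sum>k. A (k + d) * t ^ k) + t ^ 2 * (\<Sum>k. B (k + d) * t ^ k)))"
    by (simp only: sums_mult)
  then show ?thesis
    using sums_zero_iff_shift[of d T] \<open>\<And>n. n < d \<Longrightarrow> T n = 0\<close> by (simp add: T_def A_def B_def)
qed

lemma lowest_hom_part_deriv_vf_quintic_nonpos:
  assumes sm: "summable (\<lambda>n. real n * hom_coeff_norm c n * \<sigma> ^ n)" and "\<sigma> > 0" and "\<epsilon> > 0"
    and deriv: "\<And>z. z \<in> ball 0 \<sigma> \<Longrightarrow> (p has_derivative (\<lambda>h. \<Sum>n. hom_part_deriv c n z h)) (at z)"
    and decreasing: "\<And>z. z \<in> ball 0 \<epsilon> - {0} \<Longrightarrow> frechet_derivative p (at z) (vf z) < 0"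
    and below: "\<And>n i. n < d \<Longrightarrow> i \<le> n \<Longrightarrow> c i (n - i) = 0" and "d \<ge> 1"
    and "norm u = 1"
  shows "hom_part_deriv c d u (vf_quintic u) \<le> 0"
proof -
  define H where "H t = (\<Sum>k. hom_part_deriv c (k + d) u (vf_quintic u) * t ^ k)
      + t ^ 2 * (\<Sum>k. hom_part_deriv c (k + d) u (vf u - vf_quintic u) * t ^ k)" for t :: real
  have "isCont H 0"
    unfolding H_def using \<open>\<sigma> > 0\<close>
    by (intro continuous_intros isCont_powser[where K = \<sigma>]
        summable_hom_part_deriv_tail[OF sm _ \<open>norm u = 1\<close>]) auto
  moreover have "H t < 0" if "0 < t" "t < min \<epsilon> \<sigma>" for t
  proof -
    have in_ball: "t *\<^sub>R u \<in> ball 0 \<sigma>" and in_punctured: "t *\<^sub>R u \<in> ball 0 \<epsilon> - {0}"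
      using that \<open>norm u = 1\<close> by auto
    have "(\<Sum>n. hom_part_deriv c n (t *\<^sub>R u) (vf (t *\<^sub>R u))) < 0"
      using decreasing[OF in_punctured] frechet_derivative_at[OF deriv[OF in_ball], symmetric] by simp
    moreover have "(\<Sum>n. hom_part_deriv c n (t *\<^sub>R u) (vf (t *\<^sub>R u))) = t ^ (d + 4) * H t"
      unfolding H_def using that
      by (intro sums_unique[symmetric] hom_part_deriv_vf_series_along_ray[OF sm \<open>\<sigma> > 0\<close>
          \<open>norm u = 1\<close> _ _ below \<open>d \<ge> 1\<close>]) auto
    ultimately show ?thesis
      using that by (simp add: mult_less_0_iff)
  qed
  then have "\<forall>\<^sub>F t in at_right 0. H t \<le> 0"
    unfolding eventually_at_right_field using \<open>\<epsilon> > 0\<close> \<open>\<sigma> > 0\<close>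
    by (intro exI[of _ "min \<epsilon> \<sigma>"]) (auto intro: less_imp_le)
  ultimately have "H 0 \<le> 0"
    by (intro tendsto_upperbound[of H]) (auto simp: isCont_def filterlim_at_split)
  then show ?thesis
    by (simp add: H_def)
qed

theorem no_analytic_lyapunov_function:
  assumes "open S" and "(0, 0) \<in> S" and "real_analytic_on p S" and "p (0, 0) = 0"
    and lyapunov: "\<forall>z\<in>S - {(0, 0)}. p z > 0 \<and> frechet_derivative p (at z) (vf z) < 0"
  shows False
proof -
  obtain \<sigma> c where "\<sigma> > 0" and sm: "summable (\<lambda>n. real n * hom_coeff_norm c n * \<sigma> ^ n)"
    and sums: "\<And>z. z \<in> ball 0 \<sigma> \<Longrightarrow> (\<lambda>n. hom_part c n z) sums p z"
    using real_analytic_on_hom_part_expansion[OF assms(3,2)] by blast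
  obtain e where "e > 0" "ball 0 e \<subseteq> S"
    using \<open>open S\<close> \<open>(0, 0) \<in> S\<close> open_contains_ball_eq unfolding zero_prod_def by blast
  define \<epsilon> where "\<epsilon> = min e \<sigma>"
  have "\<epsilon> > 0" "\<epsilon> \<le> \<sigma>" "ball 0 \<epsilon> \<subseteq> S"
    using \<open>e > 0\<close> \<open>\<sigma> > 0\<close> \<open>ball 0 e \<subseteq> S\<close> by (auto simp: \<epsilon>_def)
  have deriv: "(p has_derivative (\<lambda>h. \<Sum>n. hom_part_deriv c n z h)) (at z)" if "z \<in> ball 0 \<sigma>" for z
    by (rule hom_part_series_has_derivative[OF sm \<open>\<sigma> > 0\<close> sums that])
  define z where "z = (\<epsilon> / 2, 0 :: real)"
  have "z \<in> ball 0 \<epsilon> - {0}"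
    using \<open>\<epsilon> > 0\<close> by (auto simp: z_def zero_prod_def dist_norm norm_Pair)
  then have z: "z \<in> S - {(0, 0)}" "z \<in> ball 0 \<sigma>"
    using \<open>ball 0 \<epsilon> \<subseteq> S\<close> \<open>\<epsilon> \<le> \<sigma>\<close> by (auto simp: zero_prod_def)
  have "p z \<noteq> 0"
    using lyapunov z(1) by force
  with sums[OF z(2)] have "\<exists>n. \<exists>i\<le>n. c i (n - i) \<noteq> 0"
    by (rule hom_part_coeff_nonzero_if_sums_nonzero)
  define d where "d = (LEAST n. \<exists>i\<le>n. c i (n - i) \<noteq> 0)"
  have lowest: "\<exists>i\<le>d. c i (d - i) \<noteq> 0"
    unfolding d_def by (rule LeastI_ex) fact
  have below: "c i (n - i) = 0" if "n < d" "i \<le> n" for n i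
    using not_less_Least[of n "\<lambda>n. \<exists>i\<le>n. c i (n - i) \<noteq> 0"] that by (auto simp: d_def)
  have "c 0 0 = 0"
    using hom_part_sums_at_0[OF sums[of 0]] \<open>\<sigma> > 0\<close> \<open>p (0, 0) = 0\<close> by (simp add: zero_prod_def)
  then have "d \<ge> 1"
    using lowest by (cases d) auto
  have "hom_part_deriv c d u (vf_quintic u) \<le> 0" if "norm u = 1" for u
    by (rule lowest_hom_part_deriv_vf_quintic_nonpos[OF sm \<open>\<sigma> > 0\<close> \<open>\<epsilon> > 0\<close> deriv _ below \<open>d \<ge> 1\<close> that])
       (use lyapunov \<open>ball 0 \<epsilon> \<subseteq> S\<close> in \<open>auto simp: zero_prod_def\<close>)
  then obtain K where
    profile: "\<And>u. norm u = 1 \<Longrightarrow> hom_part c d u = K * (2 * (fst u ^ 4 + snd u ^ 4)) powr (real d / 2)"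
    and "odd d \<Longrightarrow> K = 0"
    using hom_part_on_unit_circle by blast
  then show False
    using lowest hom_part_coeffs_eq_zero_if_quartic_profile[OF \<open>d \<ge> 1\<close> profile] by blast
qed

section \<open>Monotonicity on the half-line\<close>

lemma continuous_on_if_has_real_derivative_halfline:
  assumes "\<And>t. t \<ge> 0 \<Longrightarrow> (g has_real_derivative g' t) (at t within {0..})" and "T \<subseteq> {0..}"
  shows "continuous_on T g"
proof (rule continuous_on_eq_continuous_within[THEN iffD2], rule ballI)
  fix x assume "x \<in> T"
  then have "continuous (at x within {0..}) g"
    using assms DERIV_continuous by blast
  then show "continuous (at x within T) g"
    by (rule continuous_within_subset) fact
qed

lemma DERIV_nonpos_imp_decreasing_halfline:
  fixes g g' :: "real \<Rightarrow> real"
  assumes deriv: "\<And>t. t \<ge> 0 \<Longrightarrow> (g has_real_derivative g' t) (at t within {0..})"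
    and nonpos: "\<And>t. a < t \<Longrightarrow> t < b \<Longrightarrow> g' t \<le> 0" and "0 \<le> a" "a \<le> b"
  shows "g b \<le> g a"
proof (rule DERIV_nonpos_imp_decreasing_open[OF \<open>a \<le> b\<close>])
  fix x assume x: "a < x" "x < b"
  then have "x \<in> interior {0..}"
    using \<open>0 \<le> a\<close> by (simp add: interior_real_atLeast)
  then have "(g has_real_derivative g' x) (at x)"
    using deriv[of x] x \<open>0 \<le> a\<close> at_within_interior by fastforce
  then show "\<exists>y. (g has_real_derivative y) (at x) \<and> y \<le> 0"
    using nonpos x by blast
qed (rule continuous_on_if_has_real_derivative_halfline[OF deriv], use \<open>0 \<le> a\<close> in auto)

lemma DERIV_le_imp_linear_decrease_halfline:
  fixes g g' :: "real \<Rightarrow> real"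
  assumes deriv: "\<And>t. t \<ge> 0 \<Longrightarrow> (g has_real_derivative g' t) (at t within {0..})"
    and bound: "\<And>t. a < t \<Longrightarrow> t < b \<Longrightarrow> g' t \<le> - c" and "0 \<le> a" "a \<le> b"
  shows "g b \<le> g a - c * (b - a)"
proof -
  have "g b + c * b \<le> g a + c * a"
  proof (rule DERIV_nonpos_imp_decreasing_halfline[where g = "\<lambda>t. g t + c * t" and g' = "\<lambda>t. g' t + c"])
    show "((\<lambda>t. g t + c * t) has_real_derivative g' t + c) (at t within {0..})" if "t \<ge> 0" for t
      using deriv[OF that] by (auto intro!: derivative_eq_intros)
    show "g' t + c \<le> 0" if "a < t" "t < b" for t
      using bound[OF that] by simp
  qed fact+
  then show ?thesis
    by (simp add: algebra_simps)
qed

text \<open>At the first time \<open>g\<close> would reach a level between \<open>g 0\<close> and \<open>B\<close>, it must already have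
  increased while staying below \<open>B\<close>.\<close>
lemma DERIV_nonpos_below_imp_le_initial:
  fixes g g' :: "real \<Rightarrow> real"
  assumes deriv: "\<And>t. t \<ge> 0 \<Longrightarrow> (g has_real_derivative g' t) (at t within {0..})"
    and nonpos: "\<And>t. t \<ge> 0 \<Longrightarrow> g t < B \<Longrightarrow> g' t \<le> 0" and "g 0 < B" and "T \<ge> 0"
  shows "g T \<le> g 0"
proof (rule ccontr)
  assume "\<not> g T \<le> g 0"
  define c where "c = min (g T) ((g 0 + B) / 2)"
  have c: "g 0 < c" "c < B" "c \<le> g T"
    using \<open>\<not> g T \<le> g 0\<close> \<open>g 0 < B\<close> by (auto simp: c_def min_def)
  define A where "A = {0..T} \<inter> g -` {c..}"
  have "closed A"
    unfolding A_def
    by (rule continuous_closed_preimage[OF continuous_on_if_has_real_derivative_halfline[OF deriv]]) auto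
  moreover have "T \<in> A" "bdd_below A"
    using \<open>T \<ge> 0\<close> c by (auto simp: A_def intro: bdd_belowI[of _ 0])
  ultimately have "Inf A \<in> A"
    using closed_contains_Inf by blast
  then have first: "0 \<le> Inf A" "c \<le> g (Inf A)"
    by (auto simp: A_def)
  have below_c: "g t < c" if "0 \<le> t" "t < Inf A" for t
    using cInf_lower[OF _ \<open>bdd_below A\<close>, of t] \<open>Inf A \<in> A\<close> that by (fastforce simp: A_def)
  have "g' t \<le> 0" if "0 < t" "t < Inf A" for t
  proof -
    have "g t < B"
      using below_c[of t] that \<open>c < B\<close> by simp
    then show ?thesis
      using nonpos[of t] that by simp
  qed
  then have "g (Inf A) \<le> g 0"
    using DERIV_nonpos_imp_decreasing_halfline[OF deriv, of 0 "Inf A"] first(1) by simp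
  then show False
    using first c by simp
qed

section \<open>A Lyapunov function for the field\<close>

definition lyap :: "real \<times> real \<Rightarrow> real" where
  "lyap z = 2 * (fst z ^ 4 + snd z ^ 4) / (fst z ^ 2 + snd z ^ 2)"

definition lyap_deriv :: "real \<times> real \<Rightarrow> real \<times> real \<Rightarrow> real" where
  "lyap_deriv z h = (if z = 0 then 0 else
     (8 * (fst z ^ 3 * fst h + snd z ^ 3 * snd h) * (fst z ^ 2 + snd z ^ 2)
      - 4 * (fst z ^ 4 + snd z ^ 4) * (fst z * fst h + snd z * snd h)) / (fst z ^ 2 + snd z ^ 2) ^ 2)"

lemma power2_norm_prod: "norm z ^ 2 = fst z ^ 2 + snd z ^ 2" for z :: "real \<times> real"
  by (simp add: norm_prod_def)

lemma norm_sq_le_lyap: "norm z ^ 2 \<le> lyap z"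
proof (cases "z = 0")
  case False
  then have "fst z ^ 2 + snd z ^ 2 > 0"
    by (simp add: prod_eq_iff add_pos_nonneg sum_power2_gt_zero_iff)
  moreover have "(fst z ^ 2 + snd z ^ 2) ^ 2 \<le> 2 * (fst z ^ 4 + snd z ^ 4)"
    using sum_squared_le_2_sum_squares[of "fst z ^ 2" "snd z ^ 2"] by (simp flip: power_mult)
  ultimately show ?thesis
    unfolding power2_norm_prod lyap_def by (simp add: le_divide_eq power2_eq_square)
qed (simp add: lyap_def)

lemma lyap_le_2_norm_sq: "lyap z \<le> 2 * norm z ^ 2"
proof (cases "z = 0")
  case False
  then have "fst z ^ 2 + snd z ^ 2 > 0"
    by (simp add: prod_eq_iff add_pos_nonneg sum_power2_gt_zero_iff)
  moreover have "fst z ^ 4 + snd z ^ 4 \<le> (fst z ^ 2 + snd z ^ 2) ^ 2"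
    by (simp add: power2_sum flip: power_mult)
  ultimately show ?thesis
    unfolding power2_norm_prod lyap_def by (simp add: divide_le_eq power2_eq_square algebra_simps)
qed (simp add: lyap_def)

lemma lyap_nonneg: "lyap z \<ge> 0"
  using norm_sq_le_lyap[of z] by (meson order_trans zero_le_power2)

lemma lyap_has_derivative: "(lyap has_derivative lyap_deriv z) (at z)"
proof (cases "z = 0")
  case True
  have "((\<lambda>y. norm (lyap y - lyap 0 - 0) / norm (y - 0)) \<longlongrightarrow> 0) (at (0 :: real \<times> real))"
  proof (rule Lim_null_comparison)
    have "\<bar>lyap y\<bar> / norm y \<le> 2 * norm y" for y
      using lyap_le_2_norm_sq[of y] lyap_nonneg[of y]
      by (cases "y = 0") (simp_all add: divide_le_eq power2_eq_square mult.assoc)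
    moreover have "lyap 0 = 0"
      by (simp add: lyap_def)
    ultimately show "\<forall>\<^sub>F y in at 0. norm (norm (lyap y - lyap 0 - 0) / norm (y - 0)) \<le> 2 * norm y"
      by simp
    show "((\<lambda>y. 2 * norm y) \<longlongrightarrow> 0) (at (0 :: real \<times> real))"
      by (auto intro!: tendsto_eq_intros)
  qed
  then show ?thesis
    unfolding has_derivative_iff_norm using True
    by (simp add: lyap_deriv_def[abs_def] bounded_linear_zero)
next
  case False
  then have "fst z ^ 2 + snd z ^ 2 \<noteq> 0"
    by (simp add: prod_eq_iff sum_power2_eq_zero_iff)
  then show ?thesis
    unfolding lyap_def[abs_def] lyap_deriv_def[abs_def] using False
    by (auto intro!: derivative_eq_intros ext simp: field_simps power2_eq_square power3_eq_cube)
qed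

text \<open>\<open>g\<close> is \<open>(x\<^sup>2 + y\<^sup>2)\<^sup>2 / 2\<close> times the gradient of \<open>lyap\<close>, and the field is \<open>J g - (x\<^sup>2 + y\<^sup>2) g\<close>
  with \<open>J\<close> the rotation by \<open>\<pi>/2\<close>; hence \<open>lyap\<close> decreases along it at the rate \<open>-2 |g|\<^sup>2 / (x\<^sup>2 + y\<^sup>2)\<close>.\<close>
definition lyap_grad_scaled :: "real \<times> real \<Rightarrow> real \<times> real" where
  "lyap_grad_scaled z = (let x = fst z; y = snd z in
     (2*x*(x^4 + 2*x^2*y^2 - y^4), 2*y*(- (x^4) + 2*x^2*y^2 + y^4)))"

lemma vf_eq_rotation_minus_radial:
  "vf z = (- snd (lyap_grad_scaled z), fst (lyap_grad_scaled z))
     - (fst z ^ 2 + snd z ^ 2) *\<^sub>R lyap_grad_scaled z"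
  by (simp add: vf_def lyap_grad_scaled_def Let_def algebra_simps)

lemma lyap_deriv_eq_grad:
  assumes "z \<noteq> 0"
  shows "lyap_deriv z k = 2 * (fst (lyap_grad_scaled z) * fst k + snd (lyap_grad_scaled z) * snd k)
    / (fst z ^ 2 + snd z ^ 2) ^ 2"
proof -
  define x y where "x = fst z" and "y = snd z"
  have "8 * (x ^ 3 * fst k + y ^ 3 * snd k) * (x ^ 2 + y ^ 2) - 4 * (x ^ 4 + y ^ 4) * (x * fst k + y * snd k)
      = 2 * (2*x*(x^4 + 2*x^2*y^2 - y^4) * fst k + 2*y*(- (x^4) + 2*x^2*y^2 + y^4) * snd k)"
    by algebra
  then show ?thesis
    using assms by (simp add: lyap_deriv_def lyap_grad_scaled_def Let_def x_def y_def)
qed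

lemma lyap_deriv_vf_le: "lyap_deriv z (vf z) \<le> - 2 * norm z ^ 8"
proof (cases "z = 0")
  case False
  define x y where "x = fst z" and "y = snd z"
  define g1 g2 where "g1 = fst (lyap_grad_scaled z)" and "g2 = snd (lyap_grad_scaled z)"
  define R V where "R = x ^ 2 + y ^ 2" and "V = x ^ 4 + y ^ 4"
  have "R > 0"
    using False by (simp add: R_def x_def y_def prod_eq_iff add_pos_nonneg sum_power2_gt_zero_iff)
  have "lyap_deriv z (vf z) = 2 * (g1 * (- g2 - R * g1) + g2 * (g1 - R * g2)) / R ^ 2"
    using lyap_deriv_eq_grad[OF False, of "vf z"] vf_eq_rotation_minus_radial[of z]
    by (simp add: g1_def g2_def R_def x_def y_def)
  also have "\<dots> = - 2 * (g1 ^ 2 + g2 ^ 2) / R"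
    using \<open>R > 0\<close> by (simp add: field_simps power2_eq_square)
  also have "\<dots> \<le> - 2 * (4 * R * V ^ 2) / R"
  proof -
    \<comment> \<open>Cauchy-Schwarz, where \<open>x g1 + y g2 = 2 R V\<close> is Euler's identity for \<open>lyap\<close>\<close>
    have "x * g1 + y * g2 = 2 * R * V"
      unfolding g1_def g2_def R_def V_def x_def y_def lyap_grad_scaled_def Let_def by simp algebra
    then have "R * (4 * R * V ^ 2) = (x * g1 + y * g2) ^ 2"
      by (simp add: power2_eq_square)
    also have "\<dots> \<le> (x * g1 + y * g2) ^ 2 + (x * g2 - y * g1) ^ 2"
      by simp
    also have "\<dots> = R * (g1 ^ 2 + g2 ^ 2)"
      unfolding R_def by algebra
    finally have "R * (4 * R * V ^ 2) \<le> R * (g1 ^ 2 + g2 ^ 2)" .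
    then have "4 * R * V ^ 2 \<le> g1 ^ 2 + g2 ^ 2"
      using \<open>R > 0\<close> by simp
    then show ?thesis
      using \<open>R > 0\<close> by (intro divide_right_mono) auto
  qed
  also have "\<dots> = - 8 * V ^ 2"
    using \<open>R > 0\<close> by simp
  also have "\<dots> \<le> - 2 * (R ^ 2) ^ 2"
  proof -
    have "R ^ 2 \<le> 2 * V"
      using sum_squared_le_2_sum_squares[of "x ^ 2" "y ^ 2"] by (simp add: R_def V_def flip: power_mult)
    then have "(R ^ 2) ^ 2 \<le> (2 * V) ^ 2"
      by (intro power_mono) auto
    then show ?thesis
      by (simp add: power_mult_distrib)
  qed
  also have "(R ^ 2) ^ 2 = norm z ^ 8"
    using power2_norm_prod[of z] power_mult[of "norm z" 2 4] by (simp add: R_def x_def y_def)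
  finally show ?thesis .
qed (simp add: lyap_deriv_def)

lemma lyap_deriv_vf_nonpos: "lyap_deriv z (vf z) \<le> 0"
  using lyap_deriv_vf_le[of z] zero_le_power[OF norm_ge_zero, of z 8] by linarith

lemma lyap_comp_has_real_derivative:
  assumes "(\<phi> has_vector_derivative v) (at t within S)"
  shows "((\<lambda>t. lyap (\<phi> t)) has_real_derivative lyap_deriv (\<phi> t) v) (at t within S)"
  using vector_derivative_diff_chain_within[OF assms has_derivative_at_withinI[OF lyap_has_derivative]]
  by (simp add: o_def has_real_derivative_iff_has_vector_derivative)

lemma lyap_solution_has_real_derivative:
  assumes "is_solution \<phi>" and "t \<ge> 0"
  shows "((\<lambda>t. lyap (\<phi> t)) has_real_derivative lyap_deriv (\<phi> t) (vf (\<phi> t))) (at t within {0..})"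
  using assms unfolding is_solution_def by (intro lyap_comp_has_real_derivative) auto

lemma lyap_solution_decreasing:
  assumes "is_solution \<phi>" and "0 \<le> a" "a \<le> b"
  shows "lyap (\<phi> b) \<le> lyap (\<phi> a)"
proof (rule DERIV_nonpos_imp_decreasing_halfline[where g = "\<lambda>t. lyap (\<phi> t)"])
  show "((\<lambda>t. lyap (\<phi> t)) has_real_derivative lyap_deriv (\<phi> t) (vf (\<phi> t))) (at t within {0..})"
    if "t \<ge> 0" for t
    by (rule lyap_solution_has_real_derivative[OF assms(1) that])
  show "lyap_deriv (\<phi> t) (vf (\<phi> t)) \<le> 0" for t
    by (rule lyap_deriv_vf_nonpos)
qed fact+

lemma solutions_stable:
  assumes "\<epsilon> > 0"
  shows "\<exists>\<delta>>0. \<forall>\<phi>. is_solution \<phi> \<and> norm (\<phi> 0) < \<delta> \<longrightarrow> (\<forall>t\<ge>0. norm (\<phi> t) < \<epsilon>)"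
proof (intro exI[of _ "\<epsilon> / 2"] conjI allI impI)
  fix \<phi> and t :: real
  assume \<phi>: "is_solution \<phi> \<and> norm (\<phi> 0) < \<epsilon> / 2" and "0 \<le> t"
  have "norm (\<phi> t) ^ 2 \<le> lyap (\<phi> t)"
    by (rule norm_sq_le_lyap)
  also have "\<dots> \<le> lyap (\<phi> 0)"
    using lyap_solution_decreasing \<phi> \<open>0 \<le> t\<close> by blast
  also have "\<dots> \<le> 2 * norm (\<phi> 0) ^ 2"
    by (rule lyap_le_2_norm_sq)
  also have "\<dots> \<le> 2 * (\<epsilon> / 2) ^ 2"
    using \<phi> by (intro mult_left_mono power_mono) auto
  also have "\<dots> < \<epsilon> ^ 2"
    using \<open>\<epsilon> > 0\<close> by (simp add: power_divide)
  finally show "norm (\<phi> t) < \<epsilon>"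
    using \<open>\<epsilon> > 0\<close> by (simp add: power_less_imp_less_base)
qed (use \<open>\<epsilon> > 0\<close> in simp)

lemma lyap_solution_eventually_below:
  assumes sol: "is_solution \<phi>" and "\<eta> > 0"
  shows "\<exists>t0\<ge>0. lyap (\<phi> t0) < \<eta>"
proof (rule ccontr)
  assume "\<not> ?thesis"
  then have big: "lyap (\<phi> t) \<ge> \<eta>" if "t \<ge> 0" for t
    using that by force
  define c where "c = 2 * (\<eta> / 2) ^ 4"
  have "c > 0"
    using \<open>\<eta> > 0\<close> by (simp add: c_def)
  define T where "T = lyap (\<phi> 0) / c + 1"
  have "T \<ge> 0"
    using \<open>c > 0\<close> lyap_nonneg[of "\<phi> 0"] by (simp add: T_def)
  have "lyap (\<phi> T) \<le> lyap (\<phi> 0) - c * (T - 0)"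
  proof (rule DERIV_le_imp_linear_decrease_halfline[where g = "\<lambda>t. lyap (\<phi> t)"])
    show "((\<lambda>t. lyap (\<phi> t)) has_real_derivative lyap_deriv (\<phi> t) (vf (\<phi> t))) (at t within {0..})"
      if "t \<ge> 0" for t
      by (rule lyap_solution_has_real_derivative[OF sol that])
    fix t assume "0 < t" "t < T"
    then have "\<eta> / 2 \<le> norm (\<phi> t) ^ 2"
      using big[of t] lyap_le_2_norm_sq[of "\<phi> t"] by simp
    then have "(\<eta> / 2) ^ 4 \<le> (norm (\<phi> t) ^ 2) ^ 4"
      using \<open>\<eta> > 0\<close> by (intro power_mono) auto
    then show "lyap_deriv (\<phi> t) (vf (\<phi> t)) \<le> - c"
      using lyap_deriv_vf_le[of "\<phi> t"] by (simp add: c_def flip: power_mult)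
  qed (use \<open>T \<ge> 0\<close> in auto)
  also have "\<dots> = - c"
    using \<open>c > 0\<close> by (simp add: T_def algebra_simps)
  finally show False
    using lyap_nonneg[of "\<phi> T"] \<open>c > 0\<close> by simp
qed

lemma solution_tendsto_0:
  assumes sol: "is_solution \<phi>"
  shows "(\<phi> \<longlongrightarrow> 0) at_top"
proof (rule tendstoI)
  fix e :: real assume "e > 0"
  then obtain t0 where "t0 \<ge> 0" "lyap (\<phi> t0) < e ^ 2"
    using lyap_solution_eventually_below[OF sol, of "e ^ 2"] by auto
  have "dist (\<phi> t) 0 < e" if "t \<ge> t0" for t
  proof -
    have "norm (\<phi> t) ^ 2 \<le> lyap (\<phi> t)"
      by (rule norm_sq_le_lyap)
    also have "\<dots> \<le> lyap (\<phi> t0)"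
      by (rule lyap_solution_decreasing[OF sol \<open>t0 \<ge> 0\<close> that])
    also have "\<dots> < e ^ 2"
      by fact
    finally show ?thesis
      using \<open>e > 0\<close> by (simp add: power2_less_imp_less)
  qed
  then show "\<forall>\<^sub>F t in at_top. dist (\<phi> t) 0 < e"
    unfolding eventually_at_top_linorder by blast
qed

section \<open>Global existence of solutions\<close>

lemma integral_has_vector_derivative_halfline:
  fixes g :: "real \<Rightarrow> 'a::banach"
  assumes "continuous_on UNIV g" and "u \<ge> 0"
  shows "((\<lambda>v. integral {0..v} g) has_vector_derivative g u) (at u within {0..})"
proof -
  have "((\<lambda>v. integral {0..v} g) has_vector_derivative g u) (at u within {0..u + 1})"
    by (rule integral_has_vector_derivative) (use assms in \<open>auto intro: continuous_on_subset\<close>)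
  moreover have "at u within {0..u + 1} = at u within {0..}"
    by (rule at_within_nhd[of _ "{..<u + 1}"]) auto
  ultimately show ?thesis
    by simp
qed

lemma integral_const_times_exp:
  fixes a m C :: real
  assumes "a > 0" and "m \<ge> 0"
  shows "integral {0..m} (\<lambda>s. C * exp (a * s)) = C * (exp (a * m) - 1) / a"
proof -
  have "((\<lambda>s. C * exp (a * s)) has_integral (C * exp (a * m) / a - C * exp (a * 0) / a)) {0..m}"
  proof (rule fundamental_theorem_of_calculus[OF \<open>m \<ge> 0\<close>])
    fix x assume "x \<in> {0..m}"
    show "((\<lambda>s. C * exp (a * s) / a) has_vector_derivative C * exp (a * x)) (at x within {0..m})"
      unfolding has_real_derivative_iff_has_vector_derivative[symmetric]
      using \<open>a > 0\<close> by (auto intro!: derivative_eq_intros)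
  qed
  then have "integral {0..m} (\<lambda>s. C * exp (a * s)) = C * exp (a * m) / a - C * exp (a * 0) / a"
    by (rule integral_unique)
  then show ?thesis
    by (simp add: diff_divide_distrib right_diff_distrib)
qed

text \<open>Bielecki's trick: in the variable \<open>\<psi> t = e\<^sup>-\<^sup>a\<^sup>t \<phi> t\<close> the Picard operator of \<open>\<phi>' = F \<phi>\<close>,
  \<open>\<phi>(0) = z\<^sub>0\<close>, is a contraction of the bounded continuous functions once \<open>a = 2L\<close>.
  Negative times are clamped to \<open>0\<close>.\<close>
definition picard_op :: "('a::banach \<Rightarrow> 'a) \<Rightarrow> real \<Rightarrow> 'a \<Rightarrow> (real \<Rightarrow>\<^sub>C 'a) \<Rightarrow> real \<Rightarrow> 'a" where
  "picard_op F a z0 \<psi> t = exp (- a * max t 0) *\<^sub>R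
     (z0 + integral {0..max t 0} (\<lambda>s. F (exp (a * s) *\<^sub>R \<psi> s)))"

context
  fixes F :: "'a::banach \<Rightarrow> 'a" and L BF a :: real
  assumes lipschitz: "L-lipschitz_on UNIV F" and bounded: "\<And>z. norm (F z) \<le> BF" and "a > 0"
begin

lemma continuous_on_picard_integrand:
  "continuous_on UNIV (\<lambda>s. F (exp (a * s) *\<^sub>R apply_bcontfun \<psi> s))"
  by (intro continuous_on_compose2[OF lipschitz_on_continuous_on[OF lipschitz]] continuous_intros
      continuous_on_apply_bcontfun) auto

lemma picard_op_bcontfun: "picard_op F a z0 \<psi> \<in> bcontfun"
proof (rule bcontfun_normI)
  let ?g = "\<lambda>s. F (exp (a * s) *\<^sub>R \<psi> s)"
  have "continuous_on {0..} (\<lambda>v. integral {0..v} ?g)"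
    using integral_has_vector_derivative_halfline[OF continuous_on_picard_integrand]
    by (auto intro: has_vector_derivative_continuous simp: continuous_on_eq_continuous_within)
  then have "continuous_on UNIV (\<lambda>t. integral {0..max t 0} ?g)"
    by (rule continuous_on_compose2) (auto intro!: continuous_intros)
  then show "continuous_on UNIV (picard_op F a z0 \<psi>)"
    unfolding picard_op_def by (intro continuous_intros)
  fix t :: real
  define m where "m = max t 0"
  have "m \<ge> 0"
    by (simp add: m_def)
  have "BF \<ge> 0"
    using bounded[of 0] norm_ge_zero order_trans by blast
  have "m * exp (- a * m) \<le> 1 / a"
  proof -
    have "a * m \<le> exp (a * m)"
      using exp_ge_add_one_self[of "a * m"] by linarith
    then have "a * m * exp (- a * m) \<le> exp (a * m) * exp (- a * m)"
      by (intro mult_right_mono) auto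
    also have "\<dots> = 1"
      by (simp flip: exp_add)
    finally show ?thesis
      using \<open>a > 0\<close> by (simp add: field_simps)
  qed
  have "norm (integral {0..m} ?g) \<le> BF * m"
    using integral_bound[OF \<open>m \<ge> 0\<close> continuous_on_subset[OF continuous_on_picard_integrand] bounded]
    by simp
  then have "norm (picard_op F a z0 \<psi> t) \<le> exp (- a * m) * (norm z0 + BF * m)"
    unfolding picard_op_def m_def[symmetric]
    by (simp, intro mult_left_mono order_trans[OF norm_triangle_ineq]) auto
  also have "\<dots> = exp (- a * m) * norm z0 + BF * (m * exp (- a * m))"
    by (simp add: algebra_simps)
  also have "\<dots> \<le> 1 * norm z0 + BF * (1 / a)"
    using \<open>m \<ge> 0\<close> \<open>BF \<ge> 0\<close> \<open>a > 0\<close> \<open>m * exp (- a * m) \<le> 1 / a\<close>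
    by (intro add_mono mult_right_mono mult_left_mono) auto
  finally show "norm (picard_op F a z0 \<psi> t) \<le> norm z0 + BF / a"
    by simp
qed

lemma dist_picard_op_le:
  assumes "a = 2 * L"
  shows "dist (picard_op F a z0 \<psi>1 t) (picard_op F a z0 \<psi>2 t) \<le> 1 / 2 * dist \<psi>1 \<psi>2"
proof -
  define m where "m = max t 0"
  define g where "g \<psi> = (\<lambda>s. F (exp (a * s) *\<^sub>R apply_bcontfun \<psi> s))" for \<psi>
  have "m \<ge> 0"
    by (simp add: m_def)
  have "L > 0"
    using \<open>a > 0\<close> assms by simp
  have cont: "continuous_on {0..m} (g \<psi>)" for \<psi>
    unfolding g_def by (rule continuous_on_subset[OF continuous_on_picard_integrand]) simp
  have int: "g \<psi> integrable_on {0..m}" for \<psi>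
    by (rule integrable_continuous_real[OF cont])
  have pointwise: "norm (g \<psi>1 s - g \<psi>2 s) \<le> L * dist \<psi>1 \<psi>2 * exp (a * s)" for s
  proof -
    have "norm (g \<psi>1 s - g \<psi>2 s) \<le> L * dist (exp (a * s) *\<^sub>R \<psi>1 s) (exp (a * s) *\<^sub>R \<psi>2 s)"
      using lipschitz_onD[OF lipschitz] by (simp add: g_def dist_norm)
    also have "\<dots> = L * (exp (a * s) * dist (\<psi>1 s) (\<psi>2 s))"
      by (simp add: dist_norm flip: scaleR_diff_right)
    also have "\<dots> \<le> L * (exp (a * s) * dist \<psi>1 \<psi>2)"
      using \<open>L > 0\<close> by (intro mult_left_mono dist_bounded) auto
    finally show ?thesis
      by (simp add: mult_ac)
  qed
  have "norm (integral {0..m} (g \<psi>1) - integral {0..m} (g \<psi>2))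
      = norm (integral {0..m} (\<lambda>s. g \<psi>1 s - g \<psi>2 s))"
    using integral_diff[OF int int] by simp
  also have "\<dots> \<le> integral {0..m} (\<lambda>s. L * dist \<psi>1 \<psi>2 * exp (a * s))"
    by (rule integral_norm_bound_integral)
       (auto intro!: integrable_diff int integrable_continuous_real continuous_intros simp: pointwise cont)
  also have "\<dots> = L * dist \<psi>1 \<psi>2 * (exp (a * m) - 1) / a"
    by (rule integral_const_times_exp[OF \<open>a > 0\<close> \<open>m \<ge> 0\<close>])
  finally have integral_le: "norm (integral {0..m} (g \<psi>1) - integral {0..m} (g \<psi>2))
      \<le> L * dist \<psi>1 \<psi>2 * (exp (a * m) - 1) / a" .
  have "dist (picard_op F a z0 \<psi>1 t) (picard_op F a z0 \<psi>2 t)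
      = exp (- a * m) * norm (integral {0..m} (g \<psi>1) - integral {0..m} (g \<psi>2))"
    by (simp add: picard_op_def g_def m_def[symmetric] dist_norm flip: scaleR_diff_right)
  also have "\<dots> \<le> exp (- a * m) * (L * dist \<psi>1 \<psi>2 * (exp (a * m) - 1) / a)"
    by (intro mult_left_mono integral_le) auto
  also have "\<dots> = L * dist \<psi>1 \<psi>2 * (1 - exp (- a * m)) / a"
    by (simp add: field_simps flip: exp_add)
  also have "\<dots> \<le> L * dist \<psi>1 \<psi>2 / a"
    using \<open>L > 0\<close> \<open>a > 0\<close> by (intro divide_right_mono) (auto simp: mult_left_le)
  finally show ?thesis
    using \<open>L > 0\<close> by (simp add: assms)
qed

lemma picard_global_existence:
  assumes "a = 2 * L"
  shows "\<exists>\<phi>. (\<forall>t\<ge>0. (\<phi> has_vector_derivative F (\<phi> t)) (at t within {0..})) \<and> \<phi> 0 = z0"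
proof -
  define T where "T \<psi> = Bcontfun (picard_op F a z0 \<psi>)" for \<psi>
  have T_apply: "apply_bcontfun (T \<psi>) = picard_op F a z0 \<psi>" for \<psi>
    using Bcontfun_inverse[OF picard_op_bcontfun] by (simp add: T_def)
  have "dist (T \<psi>1) (T \<psi>2) \<le> 1 / 2 * dist \<psi>1 \<psi>2" for \<psi>1 \<psi>2
    by (rule dist_bound) (simp only: T_apply dist_picard_op_le[OF assms])
  then obtain \<psi> where "T \<psi> = \<psi>"
    using banach_fix_type[of "1 / 2" T] by auto
  define g where "g = (\<lambda>s. F (exp (a * s) *\<^sub>R \<psi> s))"
  define \<phi> where "\<phi> t = exp (a * t) *\<^sub>R \<psi> t" for t
  have \<phi>_eq: "\<phi> t = z0 + integral {0..t} g" if "t \<ge> 0" for t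
  proof -
    have "apply_bcontfun \<psi> t = picard_op F a z0 \<psi> t"
      using T_apply[of \<psi>] \<open>T \<psi> = \<psi>\<close> by simp
    then show ?thesis
      using that by (simp add: \<phi>_def g_def picard_op_def flip: exp_add)
  qed
  show ?thesis
  proof (intro exI[of _ \<phi>] conjI allI impI)
    fix t :: real assume "t \<ge> 0"
    have "((\<lambda>v. z0 + integral {0..v} g) has_vector_derivative g t) (at t within {0..})"
      using integral_has_vector_derivative_halfline[OF continuous_on_picard_integrand \<open>t \<ge> 0\<close>]
      by (auto intro!: derivative_eq_intros simp: g_def)
    then have "(\<phi> has_vector_derivative g t) (at t within {0..})"
      by (rule has_vector_derivative_transform_within[where d = 1]) (use \<open>t \<ge> 0\<close> \<phi>_eq in auto)
    then show "(\<phi> has_vector_derivative F (\<phi> t)) (at t within {0..})"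
      by (simp add: g_def \<phi>_def)
  qed (use \<phi>_eq[of 0] in simp)
qed

end

definition vf_dx :: "real \<times> real \<Rightarrow> real \<times> real" where
  "vf_dx z = (let x = fst z; y = snd z in
     (8*x^3*y - 8*x*y^3 - 14*x^6 - 30*x^4*y^2 - 6*x^2*y^4 + 2*y^6,
      10*x^4 + 12*x^2*y^2 - 2*y^4 + 12*x^5*y - 8*x^3*y^3 - 12*x*y^5))"

definition vf_dy :: "real \<times> real \<Rightarrow> real \<times> real" where
  "vf_dy z = (let x = fst z; y = snd z in
     (2*x^4 - 12*x^2*y^2 - 10*y^4 - 12*x^5*y - 8*x^3*y^3 + 12*x*y^5,
      8*x^3*y - 8*x*y^3 + 2*x^6 - 6*x^4*y^2 - 30*x^2*y^4 - 14*y^6))"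

lemma vf_has_derivative: "(vf has_derivative (\<lambda>h. fst h *\<^sub>R vf_dx z + snd h *\<^sub>R vf_dy z)) (at z)"
  unfolding vf_def[abs_def] vf_dx_def vf_dy_def Let_def
  by (auto intro!: derivative_eq_intros simp: fun_eq_iff prod_eq_iff; algebra)

lemma lipschitz_on_if_continuous_partials:
  fixes f :: "real \<times> real \<Rightarrow> 'b::real_normed_vector"
  assumes "compact K" and "convex K"
    and deriv: "\<And>z. z \<in> K \<Longrightarrow> (f has_derivative (\<lambda>h. fst h *\<^sub>R fx z + snd h *\<^sub>R fy z)) (at z within K)"
    and "continuous_on K fx" "continuous_on K fy"
  obtains L where "L-lipschitz_on K f"
proof -
  have "compact ((\<lambda>z. norm (fx z) + norm (fy z)) ` K)"
    by (intro compact_continuous_image continuous_on_add continuous_on_norm assms)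
  then have "bounded ((\<lambda>z. norm (fx z) + norm (fy z)) ` K)"
    by (rule compact_imp_bounded)
  then obtain B where "B > 0" and bound: "\<And>x. x \<in> (\<lambda>z. norm (fx z) + norm (fy z)) ` K \<Longrightarrow> norm x \<le> B"
    unfolding bounded_pos by blast
  have B: "norm (fx z) + norm (fy z) \<le> B" if "z \<in> K" for z
    using bound[of "norm (fx z) + norm (fy z)"] that by simp
  have "B-lipschitz_on K f"
  proof (rule bounded_derivative_imp_lipschitz[OF deriv \<open>convex K\<close>])
    fix z assume "z \<in> K"
    show "onorm (\<lambda>h. fst h *\<^sub>R fx z + snd h *\<^sub>R fy z) \<le> B"
    proof (rule onorm_le)
      fix h :: "real \<times> real"
      have "norm (fst h *\<^sub>R fx z + snd h *\<^sub>R fy z) \<le> \<bar>fst h\<bar> * norm (fx z) + \<bar>snd h\<bar> * norm (fy z)"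
        by (rule order_trans[OF norm_triangle_ineq]) simp
      also have "\<dots> \<le> norm h * norm (fx z) + norm h * norm (fy z)"
        by (intro add_mono mult_right_mono abs_fst_le_norm abs_snd_le_norm) auto
      also have "\<dots> = norm h * (norm (fx z) + norm (fy z))"
        by (simp add: distrib_left)
      also have "\<dots> \<le> B * norm h"
        using B[OF \<open>z \<in> K\<close>] by (simp add: mult_left_mono mult.commute[of B])
      finally show "norm (fst h *\<^sub>R fx z + snd h *\<^sub>R fy z) \<le> B * norm h" .
    qed
  qed (use \<open>B > 0\<close> in simp_all)
  then show thesis
    by (rule that)
qed

definition vf_truncated :: "real \<Rightarrow> real \<times> real \<Rightarrow> real \<times> real" where
  "vf_truncated R z = vf (closest_point (cball 0 R) z)"

lemma vf_truncated_lipschitz_bounded: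
  assumes "R \<ge> 0"
  obtains L B where "L > 0" and "L-lipschitz_on UNIV (vf_truncated R)" and "\<And>z. norm (vf_truncated R z) \<le> B"
proof -
  have cball: "compact (cball (0 :: real \<times> real) R)" "convex (cball (0 :: real \<times> real) R)"
    "closed (cball (0 :: real \<times> real) R)" "cball (0 :: real \<times> real) R \<noteq> {}"
    using assms by auto
  have "continuous_on (cball 0 R) vf_dx" "continuous_on (cball 0 R) vf_dy"
    unfolding vf_dx_def vf_dy_def Let_def by (intro continuous_intros)+
  then obtain L where L: "L-lipschitz_on (cball 0 R) vf"
    using lipschitz_on_if_continuous_partials[OF cball(1,2) has_derivative_at_withinI[OF vf_has_derivative]]
    by blast
  have "(L + 1)-lipschitz_on UNIV (vf_truncated R)"
  proof (rule lipschitz_onI)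
    fix z w :: "real \<times> real"
    have "dist (vf_truncated R z) (vf_truncated R w)
        \<le> L * dist (closest_point (cball 0 R) z) (closest_point (cball 0 R) w)"
      unfolding vf_truncated_def
      by (rule lipschitz_onD[OF L closest_point_in_set closest_point_in_set]) (use cball in auto)
    also have "\<dots> \<le> L * dist z w"
      using closest_point_lipschitz[OF cball(2-4)] lipschitz_on_nonneg[OF L] by (intro mult_left_mono) auto
    also have "\<dots> \<le> (L + 1) * dist z w"
      by (simp add: algebra_simps)
    finally show "dist (vf_truncated R z) (vf_truncated R w) \<le> (L + 1) * dist z w" .
  qed (use lipschitz_on_nonneg[OF L] in simp)
  moreover have "continuous_on (cball 0 R) (\<lambda>z. norm (vf z))"
    unfolding vf_def Let_def by (intro continuous_intros)
  then obtain B where "\<And>z. z \<in> cball 0 R \<Longrightarrow> norm (vf z) \<le> B"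
    using continuous_attains_sup[OF cball(1,4)] by blast
  then have "norm (vf_truncated R z) \<le> B" for z
    unfolding vf_truncated_def using closest_point_in_set[OF cball(3,4)] by blast
  ultimately show thesis
    using lipschitz_on_nonneg[OF L] that[of "L + 1"] by force
qed

lemma solution_exists: "\<exists>\<phi>. is_solution \<phi> \<and> \<phi> 0 = z0"
proof -
  define M where "M = lyap z0 + 1"
  define R where "R = sqrt M"
  have "M > 0" "lyap z0 < M"
    using lyap_nonneg[of z0] by (auto simp: M_def)
  have inside: "vf_truncated R z = vf z" if "lyap z < M" for z
  proof -
    have "norm z \<le> R"
      unfolding R_def using norm_sq_le_lyap[of z] that by (intro real_le_rsqrt) simp
    then show ?thesis
      by (simp add: vf_truncated_def closest_point_self)
  qed
  have "R \<ge> 0"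
    using \<open>M > 0\<close> by (simp add: R_def)
  then obtain L B where "L > 0" "L-lipschitz_on UNIV (vf_truncated R)" "\<And>z. norm (vf_truncated R z) \<le> B"
    using vf_truncated_lipschitz_bounded by blast
  then have "\<exists>\<phi>. (\<forall>t\<ge>0. (\<phi> has_vector_derivative vf_truncated R (\<phi> t)) (at t within {0..})) \<and> \<phi> 0 = z0"
    by (intro picard_global_existence[where a = "2 * L"]) auto
  then obtain \<phi> where \<phi>: "\<And>t. t \<ge> 0 \<Longrightarrow> (\<phi> has_vector_derivative vf_truncated R (\<phi> t)) (at t within {0..})"
    and "\<phi> 0 = z0"
    by blast
  have "lyap (\<phi> t) \<le> lyap (\<phi> 0)" if "t \<ge> 0" for t
  proof (rule DERIV_nonpos_below_imp_le_initial[where B = M])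
    show "((\<lambda>t. lyap (\<phi> t)) has_real_derivative lyap_deriv (\<phi> t) (vf_truncated R (\<phi> t))) (at t within {0..})"
      if "t \<ge> 0" for t
      by (rule lyap_comp_has_real_derivative[OF \<phi>[OF that]])
    show "lyap_deriv (\<phi> t) (vf_truncated R (\<phi> t)) \<le> 0" if "lyap (\<phi> t) < M" for t
      using inside[OF that] lyap_deriv_vf_nonpos[of "\<phi> t"] by simp
  qed (use \<open>lyap z0 < M\<close> \<open>\<phi> 0 = z0\<close> that in auto)
  then have "lyap (\<phi> t) < M" if "t \<ge> 0" for t
    using that \<open>lyap z0 < M\<close> \<open>\<phi> 0 = z0\<close> by fastforce
  then have "(\<phi> has_vector_derivative vf (\<phi> t)) (at t within {0..})" if "t \<ge> 0" for t
    using \<phi>[OF that] inside that by simp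
  then show ?thesis
    unfolding is_solution_def using \<open>\<phi> 0 = z0\<close> by blast
qed

lemma globally_asymptotically_stable_vf: globally_asymptotically_stable
  unfolding globally_asymptotically_stable_def
  using solution_exists solutions_stable solution_tendsto_0 by blast

theorem theorem1:
  shows "globally_asymptotically_stable \<and>
    \<not> (\<exists>p S. open S \<and> (0,0) \<in> S \<and> real_analytic_on p S \<and> p (0,0) = 0 \<and>
          (\<forall>z\<in>S - {(0,0)}. p z > 0 \<and> frechet_derivative p (at z) (vf z) < 0))"
  using globally_asymptotically_stable_vf no_analytic_lyapunov_function by blast

end
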